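(* Define a sequence $\gamma(0),\gamma(1),\gamma(2),\dots$ by $\gamma(0)=0$ and recursively $$\gamma(2^l-k)=\frac{2^l+2(-1)^l}{3}-k+2\gamma(k)\qquad (l\ge 0,\ 0\le k\le 2^{l-1}).$$ For $n\ge0$ let $P(n)$ be the $n\times n$ matrix with entries $\binom{i+j}{i}$, $0\le i,j<n$, and $\chi_n(t)=\det(tI(n)-P(n))$. Then for all $n\in\mathbf{N}$, $$\chi_n(t)\equiv (t+1)^{\gamma(n)}(t^2+t+1)^{\gamma_2(n)}\pmod 2,$$ where $\gamma_2(n)=\frac12(n-\gamma(n))$.
   Context: $I(n)$ is the $n\times n$ identity matrix; the congruence is coefficientwise in $\mathbf{Z}[t]$. *)

theory Defs
  imports "Jordan_Normal_Form.Char_Poly" "HOL-Number_Theory.Cong"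
begin

text \<open>For n \<ge> 1 let l be the least exponent with n \<le> 2^l and k = 2^l - n;
  then 0 \<le> k \<le> 2^(l-1) (indeed k < n), so the defining recursion
  gamma(2^l - k) = (2^l + 2(-1)^l)/3 - k + 2 gamma(k) determines gamma.\<close>

definition gamma_exp :: "nat \<Rightarrow> nat" where
  "gamma_exp n = (LEAST l. n \<le> 2 ^ l)"

lemma gamma_exp_le: "n \<le> 2 ^ gamma_exp n"
  unfolding gamma_exp_def by (rule LeastI[of _ n]) (simp add: less_imp_le)

lemma gamma_term: assumes "n \<noteq> 0" shows "2 ^ gamma_exp n - n < n"
proof (cases "gamma_exp n")
  case 0 then show ?thesis using gamma_exp_le[of n] assms by simp
next
  case (Suc m)
  have "\<not> n \<le> 2 ^ m" using Suc unfolding gamma_exp_def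
    using not_less_Least[of m "\<lambda>l. n \<le> 2 ^ l"] by simp
  then show ?thesis using Suc by simp
qed

function gamma :: "nat \<Rightarrow> int" where
  "gamma n = (if n = 0 then 0 else
     (let l = gamma_exp n; k = 2 ^ l - n in
       (2 ^ l + 2 * (-1) ^ l) div 3 - int k + 2 * gamma k))"
  by auto
termination
  by (relation "measure id") (auto simp: gamma_term)

declare gamma.simps[simp del]

definition gamma2 :: "nat \<Rightarrow> int" where
  "gamma2 n = (int n - gamma n) div 2"

definition pascal_mat :: "nat \<Rightarrow> int mat" where
  "pascal_mat n = mat n n (\<lambda>(i, j). int ((i + j) choose i))"

end

theory Submission
  imports Defs "HOL-Library.Z2"
begin

text \<open>Work over GF(2), where P(n) becomes A(n). By Lucas' theorem, for h = 2^L the matrix A(2h)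
  has block form [[A(h), A(h)], [A(h), 0]]; hence A(h)^3 = I and A(h)^2 is A(h) with rows and
  columns reversed. For N = A(2h) the matrix U = t^2 I + t N + N^2 satisfies (tI - N) U = (t^3 - 1) I,
  so Jacobi's complementary minor theorem relates the leading n \<times> n minor of tI - N, which is
  \<chi>_n, to the trailing k \<times> k minor of U, where n + k = 2h. For k \<le> h that minor is the
  characteristic determinant of A(k) taken at t^2, i.e. \<chi>_k(t)^2, and so
  \<chi>_{2h}(t) \<chi>_k(t)^2 = \<chi>_n(t) (t^3 + 1)^k.
  As t^3 + 1 = (t + 1)(t^2 + t + 1) with coprime factors, induction on n shows that
  \<chi>_n = (t + 1)^a (t^2 + t + 1)^b with a following the recursion that defines gamma.\<close>

section \<open>Polynomials over GF(2)\<close>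

lemma bit_poly_two [simp]: "(2 :: bit poly) = 0"
  by (metis of_nat_numeral of_nat_poly bit_2_eq_0 pCons_0_0)

lemma bit_poly_square_add: "(p + q) ^ 2 = p ^ 2 + (q ^ 2 :: bit poly)"
  by (simp add: power2_sum)

lemma bit_poly_pcompose_square: "p \<circ>\<^sub>p [:0, 0, 1:] = (p :: bit poly) ^ 2"
proof (induction p)
  case (pCons a p)
  have split: "pCons a p = [:a:] + [:0, 1:] * p"
    by (simp add: pCons_0_as_mult[symmetric])
  have const_square: "[:a:] ^ 2 = [:a:]"
    by (cases a) (simp_all add: power2_eq_square)
  have X_square: "[:0, 1:] ^ 2 = ([:0, 0, 1:] :: bit poly)"
    by (simp add: power2_eq_square)
  have "(pCons a p) ^ 2 = [:a:] ^ 2 + ([:0, 1:] * p) ^ 2"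
    by (simp only: split bit_poly_square_add)
  also have "\<dots> = [:a:] + [:0, 0, 1:] * p \<circ>\<^sub>p [:0, 0, 1:]"
    by (simp only: const_square X_square power_mult_distrib pCons.IH)
  also have "\<dots> = pCons a p \<circ>\<^sub>p [:0, 0, 1:]"
    by (simp only: pcompose_pCons)
  finally show ?case by (rule sym)
qed simp

lemma bit_poly_one_plus_X_power_two_power: "[:1, 1:] ^ 2 ^ L = (1 + monom 1 (2 ^ L) :: bit poly)"
proof (induction L)
  case (Suc L)
  have "[:1, 1:] ^ 2 ^ Suc L = ([:1, 1:] ^ 2 ^ L :: bit poly) ^ 2"
    by (simp add: power_mult[symmetric] mult.commute)
  then show ?case
    using Suc.IH by (simp add: bit_poly_square_add monom_power mult.commute)
qed (simp add: monom_Suc one_pCons)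

lemma coeff_one_plus_X_power: "coeff ([:1, 1:] ^ n) i = (of_nat (n choose i) :: 'a :: comm_semiring_1)"
proof (cases "i \<le> n")
  case False
  have "degree ([:1, 1:] ^ n :: 'a poly) \<le> n"
    by (metis degree_linear_power one_neq_zero order.refl)
  then show ?thesis using False by (simp add: coeff_eq_0 binomial_eq_0)
qed (simp add: coeff_linear_poly_power)

lemma coeff_one_plus_X_power_add_two_power:
  "coeff ([:1, 1:] ^ (m + 2 ^ L) :: bit poly) i =
     coeff ([:1, 1:] ^ m) i + (if i < 2 ^ L then 0 else coeff ([:1, 1:] ^ m) (i - 2 ^ L))"
  by (simp add: power_add bit_poly_one_plus_X_power_two_power algebra_simps coeff_monom_mult)

section \<open>Pascal's triangle modulo 2\<close>

definition pascal_bit :: "nat \<Rightarrow> nat \<Rightarrow> bit" where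
  "pascal_bit i j = of_nat ((i + j) choose i)"

lemma pascal_bit_eq_coeff: "pascal_bit i j = coeff ([:1, 1:] ^ (i + j)) i"
  by (simp add: pascal_bit_def coeff_one_plus_X_power)

lemma pascal_bit_shift_row:
  assumes "i < 2 ^ L" "j < 2 ^ L"
  shows "pascal_bit (i + 2 ^ L) j = pascal_bit i j"
  using assms coeff_one_plus_X_power_add_two_power[of "i + j" L "i + 2 ^ L"]
  by (simp add: pascal_bit_eq_coeff add_ac coeff_one_plus_X_power binomial_eq_0)

lemma pascal_bit_shift_col:
  assumes "i < 2 ^ L" "j < 2 ^ L"
  shows "pascal_bit i (j + 2 ^ L) = pascal_bit i j"
  using assms coeff_one_plus_X_power_add_two_power[of "i + j" L i]
  by (simp add: pascal_bit_eq_coeff add_ac)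

lemma pascal_bit_shift_both:
  assumes "i < 2 ^ L" "j < 2 ^ L"
  shows "pascal_bit (i + 2 ^ L) (j + 2 ^ L) = 0"
proof -
  have "pascal_bit (i + 2 ^ L) (j + 2 ^ L) = coeff ([:1, 1:] ^ (i + j + 2 ^ Suc L)) (i + 2 ^ L)"
    by (simp add: pascal_bit_eq_coeff add_ac mult_2)
  also have "\<dots> = coeff ([:1, 1:] ^ (i + j)) (i + 2 ^ L)"
    using assms by (subst coeff_one_plus_X_power_add_two_power) simp
  also have "\<dots> = 0"
    using assms by (simp add: coeff_one_plus_X_power binomial_eq_0)
  finally show ?thesis .
qed

definition pascal_bit_mat :: "nat \<Rightarrow> bit mat" where
  "pascal_bit_mat n = mat n n (\<lambda>(i, j). pascal_bit i j)"

lemma pascal_bit_mat_carrier [simp]: "pascal_bit_mat n \<in> carrier_mat n n"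
  by (simp add: pascal_bit_mat_def)

lemma dim_pascal_bit_mat [simp]:
  "dim_row (pascal_bit_mat n) = n" "dim_col (pascal_bit_mat n) = n"
  by (simp_all add: pascal_bit_mat_def)

lemma index_pascal_bit_mat [simp]:
  "i < n \<Longrightarrow> j < n \<Longrightarrow> pascal_bit_mat n $$ (i, j) = pascal_bit i j"
  by (simp add: pascal_bit_mat_def)

lemma map_mat_of_int_pascal_mat: "map_mat of_int (pascal_mat n) = pascal_bit_mat n"
  by (rule eq_matI) (auto simp: pascal_mat_def pascal_bit_def)

lemma pascal_bit_mat_one: "pascal_bit_mat 1 = 1\<^sub>m 1"
  by (rule eq_matI) (auto simp: pascal_bit_def)

lemma pascal_bit_mat_double:
  "pascal_bit_mat (2 ^ L + 2 ^ L) =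
     four_block_mat (pascal_bit_mat (2 ^ L)) (pascal_bit_mat (2 ^ L))
       (pascal_bit_mat (2 ^ L)) (0\<^sub>m (2 ^ L) (2 ^ L))" (is "_ = ?B")
proof (rule eq_matI)
  fix i j
  assume "i < dim_row ?B" and "j < dim_col ?B"
  then show "pascal_bit_mat (2 ^ L + 2 ^ L) $$ (i, j) = ?B $$ (i, j)"
    using pascal_bit_shift_row[of "i - 2 ^ L" L j] pascal_bit_shift_col[of i L "j - 2 ^ L"]
      pascal_bit_shift_both[of "i - 2 ^ L" L "j - 2 ^ L"]
    by auto
qed auto

lemma bit_mat_add_self: "(A :: bit mat) \<in> carrier_mat n m \<Longrightarrow> A + A = 0\<^sub>m n m"
  by (rule eq_matI) auto

lemma four_block_mat_square_bit:
  fixes A :: "bit mat"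
  assumes A: "A \<in> carrier_mat n n"
  shows "four_block_mat A A A (0\<^sub>m n n) * four_block_mat A A A (0\<^sub>m n n) =
    four_block_mat (0\<^sub>m n n) (A * A) (A * A) (A * A)"
proof -
  have AA: "A * A \<in> carrier_mat n n" using A by simp
  then show ?thesis
    using A by (simp add: mult_four_block_mat[OF A A A _ A A A] bit_mat_add_self[OF AA])
qed

lemma pascal_bit_mat_cube:
  "pascal_bit_mat (2 ^ L) * pascal_bit_mat (2 ^ L) * pascal_bit_mat (2 ^ L) = 1\<^sub>m (2 ^ L)"
proof (induction L)
  case 0
  show ?case unfolding power_0 pascal_bit_mat_one by simp
next
  case (Suc L)
  let ?A = "pascal_bit_mat (2 ^ L)" and ?h = "2 ^ L :: nat"
  have A: "?A \<in> carrier_mat ?h ?h" by simp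
  have AA: "?A * ?A \<in> carrier_mat ?h ?h" using mult_carrier_mat[OF A A] .
  have "pascal_bit_mat (?h + ?h) * pascal_bit_mat (?h + ?h) * pascal_bit_mat (?h + ?h)
      = four_block_mat (?A * ?A * ?A) (0\<^sub>m ?h ?h) (?A * ?A * ?A + ?A * ?A * ?A) (?A * ?A * ?A)"
    unfolding pascal_bit_mat_double four_block_mat_square_bit[OF A]
    using A AA by (simp add: mult_four_block_mat[OF _ AA AA AA A A A])
  also have "\<dots> = 1\<^sub>m (?h + ?h)"
    unfolding Suc.IH bit_mat_add_self[OF one_carrier_mat] by simp
  finally show ?case by (simp add: mult_2)
qed

section \<open>Reversal and principal submatrices\<close>

definition mat_reverse :: "'a mat \<Rightarrow> 'a mat" where
  "mat_reverse A = mat (dim_row A) (dim_col A) (\<lambda>(i, j). A $$ (dim_row A - 1 - i, dim_col A - 1 - j))"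

lemma dim_mat_reverse [simp]:
  "dim_row (mat_reverse A) = dim_row A" "dim_col (mat_reverse A) = dim_col A"
  by (simp_all add: mat_reverse_def)

lemma index_mat_reverse [simp]:
  "i < dim_row A \<Longrightarrow> j < dim_col A \<Longrightarrow>
    mat_reverse A $$ (i, j) = A $$ (dim_row A - 1 - i, dim_col A - 1 - j)"
  by (simp add: mat_reverse_def)

lemma mat_reverse_zero [simp]: "mat_reverse (0\<^sub>m n m) = 0\<^sub>m n m"
  by (rule eq_matI) auto

lemma mat_reverse_one [simp]: "mat_reverse (1\<^sub>m n) = 1\<^sub>m n"
  by (rule eq_matI) auto

lemma mat_reverse_four_block_mat:
  assumes "A \<in> carrier_mat n1 m1" "B \<in> carrier_mat n1 m2"
    and "C \<in> carrier_mat n2 m1" "D \<in> carrier_mat n2 m2"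
  shows "mat_reverse (four_block_mat A B C D) =
    four_block_mat (mat_reverse D) (mat_reverse C) (mat_reverse B) (mat_reverse A)"
  using assms by (intro eq_matI) auto

lemma det_mat_reverse:
  fixes A :: "'a :: comm_ring_1 mat"
  assumes A: "A \<in> carrier_mat n n"
  shows "det (mat_reverse A) = det A"
proof -
  define r where "r = (\<lambda>i. if i < n then n - 1 - i else i)"
  have r: "r permutes {0..<n}"
    unfolding r_def
    by (intro bij_imp_permutes bij_betw_byWitness[where f' = "\<lambda>i. if i < n then n - 1 - i else i"]) auto
  define B where "B = mat n n (\<lambda>(i, j). A $$ (r i, j))"
  define C where "C = mat n n (\<lambda>(i, j). transpose_mat B $$ (r i, j))"
  have B: "B \<in> carrier_mat n n" and C: "C \<in> carrier_mat n n"
    by (simp_all add: B_def C_def)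
  have "mat_reverse A = transpose_mat C"
    using A by (intro eq_matI) (auto simp: B_def C_def r_def)
  then have "det (mat_reverse A) = det C"
    using C by (simp add: det_transpose)
  also have "\<dots> = signof r * det B"
    unfolding C_def using B by (simp add: det_permute_rows[OF _ r] det_transpose)
  also have "\<dots> = signof r * (signof r * det A)"
    unfolding B_def by (simp add: det_permute_rows[OF A r])
  also have "\<dots> = det A"
    by (simp add: sign_def)
  finally show ?thesis .
qed

lemma pascal_bit_mat_square:
  "pascal_bit_mat (2 ^ L) * pascal_bit_mat (2 ^ L) = mat_reverse (pascal_bit_mat (2 ^ L))"
proof (induction L)
  case 0
  show ?case unfolding power_0 pascal_bit_mat_one by simp
next
  case (Suc L)
  let ?A = "pascal_bit_mat (2 ^ L)" and ?h = "2 ^ L :: nat"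
  have A: "?A \<in> carrier_mat ?h ?h" by simp
  have "pascal_bit_mat (?h + ?h) * pascal_bit_mat (?h + ?h) = mat_reverse (pascal_bit_mat (?h + ?h))"
    unfolding pascal_bit_mat_double four_block_mat_square_bit[OF A] Suc.IH
    by (simp add: mat_reverse_four_block_mat[OF A A A zero_carrier_mat])
  then show ?case by (simp add: mult_2)
qed

definition leading_principal_mat :: "nat \<Rightarrow> 'a mat \<Rightarrow> 'a mat" where
  "leading_principal_mat n A = mat n n (\<lambda>(i, j). A $$ (i, j))"

definition trailing_principal_mat :: "nat \<Rightarrow> 'a mat \<Rightarrow> 'a mat" where
  "trailing_principal_mat k A = mat k k (\<lambda>(i, j). A $$ (dim_row A - k + i, dim_col A - k + j))"

lemma jacobi_complementary_minor:
  fixes X U :: "'a :: idom mat"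
  assumes X: "X \<in> carrier_mat (n + k) (n + k)" and U: "U \<in> carrier_mat (n + k) (n + k)"
    and XU: "X * U = c \<cdot>\<^sub>m 1\<^sub>m (n + k)"
  shows "det X * det (trailing_principal_mat k U) = det (leading_principal_mat n X) * c ^ k"
proof -
  define U12 where "U12 = mat n k (\<lambda>(i, j). U $$ (i, n + j))"
  define X21 where "X21 = mat k n (\<lambda>(i, j). X $$ (n + i, j))"
  define W where "W = four_block_mat (1\<^sub>m n) U12 (0\<^sub>m k n) (trailing_principal_mat k U)"
  have U22: "trailing_principal_mat k U \<in> carrier_mat k k"
    by (simp add: trailing_principal_mat_def)
  have X11: "leading_principal_mat n X \<in> carrier_mat n n"
    by (simp add: leading_principal_mat_def)
  have W: "W \<in> carrier_mat (n + k) (n + k)"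
    using U22 by (simp add: W_def U12_def)
  have det_W: "det W = det (trailing_principal_mat k U)"
    unfolding W_def using U22 by (simp add: det_four_block_mat_lower_left_zero[of _ n _ k] U12_def)
  have col_W: "col W j = (if j < n then unit_vec (n + k) j else col U j)" if "j < n + k" for j
    using that U by (intro eq_vecI) (auto simp: W_def U12_def trailing_principal_mat_def unit_vec_def)
  have XW: "X * W = four_block_mat (leading_principal_mat n X) (0\<^sub>m n k) X21 (c \<cdot>\<^sub>m 1\<^sub>m k)"
    (is "_ = ?B")
  proof (rule eq_matI)
    fix i j
    assume "i < dim_row ?B" and "j < dim_col ?B"
    then have i: "i < n + k" and j: "j < n + k"
      using X11 by auto
    have "(X * W) $$ (i, j) = row X i \<bullet> col W j"
      using X W i j by simp
    also have "\<dots> = (if j < n then X $$ (i, j) else (X * U) $$ (i, j))"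
      using X U i j by (simp add: col_W)
    also have "\<dots> = ?B $$ (i, j)"
      using X i j by (auto simp: XU leading_principal_mat_def X21_def)
    finally show "(X * W) $$ (i, j) = ?B $$ (i, j)" .
  qed (use X W X11 in auto)
  have "det X * det W = det (X * W)"
    using det_mult[OF X W] by simp
  also have "\<dots> = det (leading_principal_mat n X) * c ^ k"
    unfolding XW using X11 by (simp add: det_four_block_mat_upper_right_zero X21_def)
  finally show ?thesis unfolding det_W .
qed

lemma leading_principal_char_poly_matrix:
  assumes "A \<in> carrier_mat m m" and "n \<le> m"
  shows "leading_principal_mat n (char_poly_matrix A) = char_poly_matrix (leading_principal_mat n A)"
  using assms by (intro eq_matI) (auto simp: leading_principal_mat_def char_poly_matrix_def)

lemma leading_principal_pascal_bit_mat:
  "n \<le> m \<Longrightarrow> leading_principal_mat n (pascal_bit_mat m) = pascal_bit_mat n"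
  by (intro eq_matI) (auto simp: leading_principal_mat_def)

section \<open>The characteristic polynomial relation\<close>

definition cube_cofactor :: "'a :: comm_ring_1 mat \<Rightarrow> 'a poly mat" where
  "cube_cofactor N = [:0, 0, 1:] \<cdot>\<^sub>m 1\<^sub>m (dim_row N)
     + [:0, 1:] \<cdot>\<^sub>m map_mat (\<lambda>a. [:a:]) N + map_mat (\<lambda>a. [:a:]) (N * N)"

lemma cube_cofactor_carrier [simp]: "N \<in> carrier_mat n n \<Longrightarrow> cube_cofactor N \<in> carrier_mat n n"
  by (simp add: cube_cofactor_def)

lemma char_poly_matrix_mult_cube_cofactor:
  fixes N :: "'a :: comm_ring_1 mat"
  assumes N: "N \<in> carrier_mat n n" and N3: "N * N * N = 1\<^sub>m n"
  shows "char_poly_matrix N * cube_cofactor N = [:-1, 0, 0, 1:] \<cdot>\<^sub>m 1\<^sub>m n"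
proof -
  interpret const: comm_ring_hom "\<lambda>a :: 'a. [:a:]"
    by unfold_locales (simp_all add: one_pCons)
  let ?t = "[:0, 1:] :: 'a poly"
  define C where "C = map_mat (\<lambda>a. [:a:]) N"
  have C: "C \<in> carrier_mat n n"
    using N by (simp add: C_def)
  have CC: "C * C \<in> carrier_mat n n"
    using C by simp
  have C2: "map_mat (\<lambda>a. [:a:]) (N * N) = C * C"
    unfolding C_def by (rule const.mat_hom_mult[OF N N])
  have "C * C * C = 1\<^sub>m n"
    using const.mat_hom_mult[OF mult_carrier_mat[OF N N] N] N3
    by (simp add: C2 const.mat_hom_one C_def)
  then have C3: "C * (C * C) = 1\<^sub>m n"
    using assoc_mult_mat[OF C C C] by simp
  have X: "char_poly_matrix N = ?t \<cdot>\<^sub>m 1\<^sub>m n - C"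
    using N by (intro eq_matI) (auto simp: char_poly_matrix_def C_def)
  have U: "cube_cofactor N = (?t * ?t) \<cdot>\<^sub>m 1\<^sub>m n + ?t \<cdot>\<^sub>m C + C * C"
    using N by (simp add: cube_cofactor_def C_def[symmetric] C2)
  have CU: "C * cube_cofactor N = (?t * ?t) \<cdot>\<^sub>m C + ?t \<cdot>\<^sub>m (C * C) + 1\<^sub>m n"
  proof -
    have a: "(?t * ?t) \<cdot>\<^sub>m 1\<^sub>m n \<in> carrier_mat n n" and b: "?t \<cdot>\<^sub>m C \<in> carrier_mat n n"
      using C by simp_all
    show ?thesis
      unfolding U mult_add_distrib_mat[OF C add_carrier_mat[OF b] CC] mult_add_distrib_mat[OF C a b]
      using C by (simp add: mult_smult_distrib[OF C] mult_smult_distrib[OF C one_carrier_mat] C3)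
  qed
  have U_carrier: "cube_cofactor N \<in> carrier_mat n n"
    using N by simp
  have "char_poly_matrix N * cube_cofactor N = ?t \<cdot>\<^sub>m cube_cofactor N - C * cube_cofactor N"
    unfolding X minus_mult_distrib_mat[OF smult_carrier_mat[OF one_carrier_mat] C U_carrier]
    using U_carrier by (simp add: mult_smult_assoc_mat[OF one_carrier_mat U_carrier])
  also have "\<dots> = [:-1, 0, 0, 1:] \<cdot>\<^sub>m 1\<^sub>m n"
    unfolding CU using C CC by (intro eq_matI) (auto simp: U algebra_simps)
  finally show ?thesis .
qed

lemma trailing_principal_cube_cofactor_pascal_bit_mat:
  assumes k: "k \<le> 2 ^ L"
  shows "trailing_principal_mat k (cube_cofactor (pascal_bit_mat (2 ^ Suc L))) =
    mat_reverse (map_mat (\<lambda>p. p \<circ>\<^sub>p [:0, 0, 1:]) (char_poly_matrix (pascal_bit_mat k)))"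
proof -
  define M where "M = (2 :: nat) ^ Suc L"
  have M: "M = 2 ^ L + 2 ^ L" and N_square: "pascal_bit_mat M * pascal_bit_mat M = mat_reverse (pascal_bit_mat M)"
    using pascal_bit_mat_square[of "Suc L"] by (simp_all add: M_def)
  have "trailing_principal_mat k (cube_cofactor (pascal_bit_mat M)) $$ (i, j) =
      mat_reverse (map_mat (\<lambda>p. p \<circ>\<^sub>p [:0, 0, 1:]) (char_poly_matrix (pascal_bit_mat k))) $$ (i, j)"
    if i: "i < k" and j: "j < k" for i j
  proof -
    \<comment> \<open>Row p and column q meet in the zero block of A(M), while N^2, the reversal of N,
      carries them back into the leading k \<times> k corner.\<close>
    define p q where "p = M - k + i" and "q = M - k + j"
    have p: "2 ^ L \<le> p" "p < M" and q: "2 ^ L \<le> q" "q < M"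
      using i j k by (simp_all add: p_def q_def M)
    have "pascal_bit_mat M $$ (p, q) = pascal_bit (p - 2 ^ L + 2 ^ L) (q - 2 ^ L + 2 ^ L)"
      using p q by simp
    also have "\<dots> = 0"
      using p q by (intro pascal_bit_shift_both) (simp_all add: M)
    finally have N_entry: "pascal_bit_mat M $$ (p, q) = 0" .
    have "M - 1 - p = k - 1 - i" "M - 1 - q = k - 1 - j"
      using i j k by (simp_all add: p_def q_def M)
    then have NN_entry: "(pascal_bit_mat M * pascal_bit_mat M) $$ (p, q) = pascal_bit (k - 1 - i) (k - 1 - j)"
      unfolding N_square using p q i j k by (simp add: M)
    have "trailing_principal_mat k (cube_cofactor (pascal_bit_mat M)) $$ (i, j) =
        cube_cofactor (pascal_bit_mat M) $$ (p, q)"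
      using i j by (simp add: trailing_principal_mat_def cube_cofactor_def p_def q_def)
    also have "\<dots> = (if i = j then [:0, 0, 1:] else 0) + [:pascal_bit (k - 1 - i) (k - 1 - j):]"
      using p q N_entry NN_entry by (simp add: cube_cofactor_def p_def q_def)
    also have "\<dots> = mat_reverse (map_mat (\<lambda>p. p \<circ>\<^sub>p [:0, 0, 1:]) (char_poly_matrix (pascal_bit_mat k))) $$ (i, j)"
      using i j by (auto simp: char_poly_matrix_def pcompose_pCons)
    finally show ?thesis .
  qed
  then show ?thesis
    unfolding M_def[symmetric]
    by (intro eq_matI) (simp_all add: trailing_principal_mat_def char_poly_matrix_def)
qed

lemma char_poly_pascal_bit_relation:
  assumes k: "k \<le> 2 ^ L"
  shows "char_poly (pascal_bit_mat (2 ^ Suc L)) * char_poly (pascal_bit_mat k) ^ 2 =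
    char_poly (pascal_bit_mat (2 ^ Suc L - k)) * [:1, 0, 0, 1:] ^ k"
proof -
  define n where "n = 2 ^ Suc L - k"
  let ?N = "pascal_bit_mat (2 ^ Suc L)"
  have size: "2 ^ Suc L = n + k"
    using k by (simp add: n_def)
  have N: "?N \<in> carrier_mat (n + k) (n + k)"
    unfolding size[symmetric] by simp
  have "char_poly_matrix ?N * cube_cofactor ?N = [:1, 0, 0, 1:] \<cdot>\<^sub>m 1\<^sub>m (n + k)"
    using char_poly_matrix_mult_cube_cofactor[OF N] pascal_bit_mat_cube[of "Suc L"] size
    by simp
  then have "det (char_poly_matrix ?N) * det (trailing_principal_mat k (cube_cofactor ?N)) =
      det (leading_principal_mat n (char_poly_matrix ?N)) * [:1, 0, 0, 1:] ^ k"
    using N by (intro jacobi_complementary_minor) simp_all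
  moreover have "det (trailing_principal_mat k (cube_cofactor ?N)) = char_poly (pascal_bit_mat k) ^ 2"
  proof -
    have "det (trailing_principal_mat k (cube_cofactor ?N)) =
        det (map_mat (\<lambda>p. p \<circ>\<^sub>p [:0, 0, 1:]) (char_poly_matrix (pascal_bit_mat k)))"
      unfolding trailing_principal_cube_cofactor_pascal_bit_mat[OF k]
      by (rule det_mat_reverse[of _ k]) simp
    also have "\<dots> = char_poly (pascal_bit_mat k) \<circ>\<^sub>p [:0, 0, 1:]"
      unfolding char_poly_def by (rule comm_ring_hom.hom_det[OF pcompose_hom.comm_ring_hom_axioms])
    finally show ?thesis
      by (simp only: bit_poly_pcompose_square)
  qed
  moreover have "leading_principal_mat n (char_poly_matrix ?N) = char_poly_matrix (pascal_bit_mat n)"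
  proof -
    have "leading_principal_mat n ?N = pascal_bit_mat n"
      unfolding size by (rule leading_principal_pascal_bit_mat) simp
    then show ?thesis
      using leading_principal_char_poly_matrix[OF N] by simp
  qed
  ultimately show ?thesis
    by (simp add: char_poly_def n_def)
qed

section \<open>Cancellation of coprime powers\<close>

lemma bezout_dvd_power_mult_imp_dvd:
  fixes r q c :: "'a :: comm_semiring_1"
  assumes bezout: "a * r + b * q = 1" and "r dvd q ^ n * c"
  shows "r dvd c"
  using assms(2)
proof (induction n arbitrary: c)
  case (Suc n)
  have "r dvd q ^ n * (q * c)"
    using Suc.prems by (simp add: mult.assoc mult.left_commute)
  then have "r dvd q * c"
    by (rule Suc.IH)
  have "c = c * (a * r + b * q)"
    using bezout by simp
  also have "\<dots> = (a * c) * r + b * (q * c)"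
    by (simp add: algebra_simps)
  finally show ?case
    using \<open>r dvd q * c\<close> by (metis dvd_add dvd_mult dvd_triv_right)
qed simp

lemma power_exponent_le_of_bezout:
  fixes p r q :: "'a :: idom"
  assumes "a * r + b * q = 1" and "\<not> r dvd 1" and "r \<noteq> 0"
    and "p * r ^ x = r ^ A * q ^ B"
  shows "x \<le> A"
proof (rule ccontr)
  assume "\<not> x \<le> A"
  then obtain d where "x = A + Suc d"
    using less_imp_Suc_add by fastforce
  then have "r ^ A * (p * r ^ d * r) = r ^ A * q ^ B"
    using assms(4) by (simp add: power_add ac_simps)
  then have "q ^ B * 1 = p * r ^ d * r"
    using \<open>r \<noteq> 0\<close> by simp
  then have "r dvd 1"
    using bezout_dvd_power_mult_imp_dvd[OF assms(1)] by (metis dvd_triv_right)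
  with assms(2) show False
    by simp
qed

lemma power_factors_cancel_of_bezout:
  fixes p r q :: "'a :: idom"
  assumes bezout: "a * r + b * q = 1" and "\<not> r dvd 1" and "\<not> q dvd 1"
    and eq: "p * (r ^ x * q ^ y) = r ^ A * q ^ B"
  shows "x \<le> A" and "y \<le> B" and "p = r ^ (A - x) * q ^ (B - y)"
proof -
  have "r \<noteq> 0"
  proof
    assume "r = 0"
    then have "1 = q * b"
      using bezout by (simp add: mult.commute)
    with assms(3) show False
      by (metis dvdI)
  qed
  have "q \<noteq> 0"
  proof
    assume "q = 0"
    then have "1 = r * a"
      using bezout by (simp add: mult.commute)
    with assms(2) show False
      by (metis dvdI)
  qed
  show x: "x \<le> A"
    using assms(1,2) \<open>r \<noteq> 0\<close> eq
    by (intro power_exponent_le_of_bezout[of a r b q "p * q ^ y"]) (simp_all add: ac_simps)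
  show y: "y \<le> B"
    using assms(1,3) \<open>q \<noteq> 0\<close> eq
    by (intro power_exponent_le_of_bezout[of b q a r "p * r ^ x"]) (simp_all add: ac_simps)
  have "p * (r ^ x * q ^ y) = (r ^ (A - x) * q ^ (B - y)) * (r ^ x * q ^ y)"
    using eq x y by (simp add: power_add[symmetric] ac_simps)
  then show "p = r ^ (A - x) * q ^ (B - y)"
    using \<open>r \<noteq> 0\<close> \<open>q \<noteq> 0\<close> by simp
qed

lemma bit_poly_factors_cancel:
  assumes "p * ([:1, 1:] ^ x * [:1, 1, 1:] ^ y) = [:1, 1:] ^ A * ([:1, 1, 1:] ^ B :: bit poly)"
  shows "x \<le> A \<and> y \<le> B \<and> p = [:1, 1:] ^ (A - x) * [:1, 1, 1:] ^ (B - y)"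
proof -
  have "[:0, 1:] * [:1, 1:] + 1 * [:1, 1, 1:] = (1 :: bit poly)"
    by (simp add: one_pCons)
  moreover have "\<not> [:1, 1 :: bit:] dvd 1" and "\<not> [:1, 1, 1 :: bit:] dvd 1"
    by (simp_all add: is_unit_iff_degree)
  ultimately show ?thesis
    using power_factors_cancel_of_bezout[of "[:0, 1:]" "[:1, 1:]" 1 "[:1, 1, 1:]" p x y A B] assms
    by simp
qed

section \<open>The exponent gamma\<close>

lemma gamma_exp_power_two: "gamma_exp (2 ^ L) = L"
  unfolding gamma_exp_def by (rule Least_equality) auto

lemma power_two_less_of_gamma_exp_Suc: "gamma_exp n = Suc L \<Longrightarrow> 2 ^ L < n"
  unfolding gamma_exp_def using not_less_Least[of L "\<lambda>l. n \<le> 2 ^ l"] by simp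

lemma gamma_zero: "gamma 0 = 0"
  by (simp add: gamma.simps)

lemma gamma_power_two: "gamma (2 ^ L) = (2 ^ L + 2 * (-1) ^ L) div 3"
  by (subst gamma.simps) (simp add: gamma_exp_power_two gamma_zero)

lemma gamma_power_two_Suc: "gamma (2 ^ Suc L) = 2 ^ L - gamma (2 ^ L)"
proof -
  have "[(2 :: int) ^ L = (-1) ^ L] (mod 3)"
    by (intro cong_pow) (simp add: cong_def)
  then have "3 dvd (2 ^ L - (-1) ^ L) + 3 * (-1 :: int) ^ L"
    by (intro dvd_add) (simp_all add: cong_iff_dvd_diff)
  then obtain z :: int where "(2 ^ L - (-1) ^ L) + 3 * (-1) ^ L = 3 * z"
    by (rule dvdE)
  then have z: "2 ^ L + 2 * (-1) ^ L = 3 * z"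
    by linarith
  then have "(2 :: int) ^ Suc L + 2 * (-1) ^ Suc L = 3 * (2 ^ L - z)"
    by simp
  then show ?thesis
    unfolding gamma_power_two using z by simp
qed

lemma gamma_eq_complement:
  assumes "n \<noteq> 0"
  shows "gamma n = gamma (2 ^ gamma_exp n) - int (2 ^ gamma_exp n - n) + 2 * gamma (2 ^ gamma_exp n - n)"
  using assms by (subst gamma.simps) (simp add: gamma_power_two Let_def)

section \<open>Factorisation of the characteristic polynomial\<close>

lemma char_poly_pascal_bit_complement:
  assumes k: "k \<le> 2 ^ L"
    and power_two: "char_poly (pascal_bit_mat (2 ^ Suc L)) = [:1, 1:] ^ a' * [:1, 1, 1:] ^ b'"
    and small: "char_poly (pascal_bit_mat k) = [:1, 1:] ^ a * [:1, 1, 1:] ^ b"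
  shows "k \<le> a' + 2 * a \<and>
    char_poly (pascal_bit_mat (2 ^ Suc L - k)) = [:1, 1:] ^ (a' + 2 * a - k) * [:1, 1, 1:] ^ (b' + 2 * b - k)"
proof -
  have rq: "[:1, 1:] ^ k * [:1, 1, 1:] ^ k = ([:1, 0, 0, 1:] ^ k :: bit poly)"
    by (simp add: one_pCons power_mult_distrib[symmetric])
  have "char_poly (pascal_bit_mat (2 ^ Suc L - k)) * ([:1, 1:] ^ k * [:1, 1, 1:] ^ k) =
      char_poly (pascal_bit_mat (2 ^ Suc L)) * char_poly (pascal_bit_mat k) ^ 2"
    unfolding rq char_poly_pascal_bit_relation[OF k] ..
  also have "\<dots> = [:1, 1:] ^ (a' + 2 * a) * [:1, 1, 1:] ^ (b' + 2 * b)"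
    unfolding power_two small by (simp add: power_add power_mult_distrib power_mult ac_simps)
  finally show ?thesis
    using bit_poly_factors_cancel by blast
qed

lemma char_poly_pascal_bit_mat_one: "char_poly (pascal_bit_mat 1) = [:1, 1:]"
  by (simp add: pascal_bit_mat_one char_poly_def char_poly_matrix_def det_def one_pCons pascal_bit_def)

lemma char_poly_pascal_bit_mat_power_two:
  "\<exists>a b. char_poly (pascal_bit_mat (2 ^ L)) = [:1, 1:] ^ a * [:1, 1, 1:] ^ b \<and> int a = gamma (2 ^ L)"
proof (induction L)
  case 0
  have "gamma 1 = 1"
    using gamma_power_two[of 0] by simp
  then show ?case
    using char_poly_pascal_bit_mat_one by (intro exI[of _ 1] exI[of _ 0]) simp
next
  case (Suc L)
  then obtain a b where ab: "char_poly (pascal_bit_mat (2 ^ L)) = [:1, 1:] ^ a * [:1, 1, 1:] ^ b"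
    and gamma_a: "int a = gamma (2 ^ L)"
    by blast
  have "[:1, 1:] ^ a * [:1, 1, 1:] ^ b \<noteq> (0 :: bit poly)"
    by simp
  moreover have "char_poly (pascal_bit_mat (2 ^ Suc L)) * ([:1, 1:] ^ a * [:1, 1, 1:] ^ b) ^ 2 =
      ([:1, 1:] ^ a * [:1, 1, 1:] ^ b) * ([:1, 1:] ^ 2 ^ L * [:1, 1, 1:] ^ 2 ^ L)"
    using char_poly_pascal_bit_relation[of "2 ^ L" L] ab
    by (simp add: one_pCons power_mult_distrib[symmetric])
  ultimately have "char_poly (pascal_bit_mat (2 ^ Suc L)) * ([:1, 1:] ^ a * [:1, 1, 1:] ^ b) =
      [:1, 1:] ^ 2 ^ L * [:1, 1, 1:] ^ 2 ^ L"
    by (simp add: power2_eq_square ac_simps)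
  then have "a \<le> 2 ^ L" and "char_poly (pascal_bit_mat (2 ^ Suc L)) = [:1, 1:] ^ (2 ^ L - a) * [:1, 1, 1:] ^ (2 ^ L - b)"
    using bit_poly_factors_cancel by blast+
  moreover have "int (2 ^ L - a) = gamma (2 ^ Suc L)"
    unfolding gamma_power_two_Suc using \<open>a \<le> 2 ^ L\<close> gamma_a by (simp add: of_nat_diff)
  ultimately show ?case
    by blast
qed

lemma char_poly_pascal_bit_mat_factors:
  "\<exists>a b. char_poly (pascal_bit_mat n) = [:1, 1:] ^ a * [:1, 1, 1:] ^ b \<and> int a = gamma n"
proof (induction n rule: less_induct)
  case (less n)
  consider "n = 0" | "n \<noteq> 0" "gamma_exp n = 0" | L where "n \<noteq> 0" "gamma_exp n = Suc L"
    by (cases "gamma_exp n") auto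
  then show ?case
  proof cases
    case 1
    then show ?thesis
      using gamma_zero by (intro exI[of _ 0] exI[of _ 0]) (simp add: char_poly_def char_poly_matrix_def)
  next
    case 2
    then have "n = 1"
      using gamma_exp_le[of n] by simp
    then show ?thesis
      using char_poly_pascal_bit_mat_power_two[of 0] by simp
  next
    case (3 L)
    define k where "k = 2 ^ Suc L - n"
    have "2 ^ L < n" and "n \<le> 2 ^ Suc L"
      using 3 power_two_less_of_gamma_exp_Suc gamma_exp_le[of n] by simp_all
    then have k: "k \<le> 2 ^ L" "k < n" and n: "n = 2 ^ Suc L - k"
      by (simp_all add: k_def)
    obtain a b where small: "char_poly (pascal_bit_mat k) = [:1, 1:] ^ a * [:1, 1, 1:] ^ b"
      and gamma_a: "int a = gamma k"
      using less.IH[OF k(2)] by blast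
    obtain a' b' where power_two: "char_poly (pascal_bit_mat (2 ^ Suc L)) = [:1, 1:] ^ a' * [:1, 1, 1:] ^ b'"
      and gamma_a': "int a' = gamma (2 ^ Suc L)"
      using char_poly_pascal_bit_mat_power_two by blast
    have "gamma n = gamma (2 ^ Suc L) - int k + 2 * gamma k"
      using gamma_eq_complement[OF 3(1)] 3(2) by (simp add: k_def)
    moreover obtain "k \<le> a' + 2 * a"
      and "char_poly (pascal_bit_mat n) = [:1, 1:] ^ (a' + 2 * a - k) * [:1, 1, 1:] ^ (b' + 2 * b - k)"
      using char_poly_pascal_bit_complement[OF k(1) power_two small] n by blast
    ultimately show ?thesis
      using gamma_a gamma_a' by (intro exI[of _ "a' + 2 * a - k"] exI) (simp add: of_nat_diff)
  qed
qed

lemma of_int_bit_eq_iff_cong: "(of_int x :: bit) = of_int y \<longleftrightarrow> [x = y] (mod 2)"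
proof -
  have "(of_int x :: bit) = of_int y \<longleftrightarrow> (even (of_int x :: bit) \<longleftrightarrow> even (of_int y :: bit))"
    by (rule Z2.bit_eq_iff)
  also have "\<dots> \<longleftrightarrow> (even x \<longleftrightarrow> even y)"
    by (simp only: even_of_int_iff)
  also have "\<dots> \<longleftrightarrow> [x = y] (mod 2)"
    unfolding cong_def by presburger
  finally show ?thesis .
qed

theorem theorem1p4:
  fixes n :: nat
  shows "\<forall>i. [coeff (char_poly (pascal_mat n)) i
            = coeff ([:1, 1:] ^ nat (gamma n) * [:1, 1, 1:] ^ nat (gamma2 n)) i] (mod 2)"
proof
  fix i
  obtain a b where ab: "char_poly (pascal_bit_mat n) = [:1, 1:] ^ a * [:1, 1, 1:] ^ b"
    and gamma_a: "int a = gamma n"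
    using char_poly_pascal_bit_mat_factors by blast
  have "n = a + 2 * b"
    using degree_monic_char_poly[OF pascal_bit_mat_carrier, of n] ab
    by (simp add: degree_mult_eq degree_power_eq)
  then have exponents: "nat (gamma n) = a" "nat (gamma2 n) = b"
    using gamma_a by (simp_all add: gamma2_def)
  have "pascal_mat n \<in> carrier_mat n n"
    by (simp add: pascal_mat_def)
  then have "map_poly of_int (char_poly (pascal_mat n)) = char_poly (pascal_bit_mat n)"
    unfolding map_mat_of_int_pascal_mat[symmetric] by (rule of_int_hom.char_poly_hom[symmetric])
  also have "\<dots> = map_poly of_int ([:1, 1:] ^ a * [:1, 1, 1:] ^ b)"
    by (simp add: ab of_int_poly_hom.hom_mult of_int_poly_hom.hom_power)
  finally show "[coeff (char_poly (pascal_mat n)) i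
      = coeff ([:1, 1:] ^ nat (gamma n) * [:1, 1, 1:] ^ nat (gamma2 n)) i] (mod 2)"
    unfolding exponents of_int_bit_eq_iff_cong[symmetric]
    by (metis coeff_map_poly of_int_0)
qed

end
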